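(* Let $(\Omega,\mathcal A)$ be a measurable space and let $K$ be a random compact set in $\mathbb C^n$. Then the functions $(\omega,z)\mapsto\Phi_{K(\omega)}(z)$ and $(\omega,z)\mapsto V_{K(\omega)}(z)=\log\Phi_{K(\omega)}(z)$ are random functions with values in $\mathbb R\cup\{\infty\}$, i.e. for each $z\in\mathbb C^n$ the maps $\omega\mapsto\Phi_{K(\omega)}(z)$ and $\omega\mapsto V_{K(\omega)}(z)$ are measurable.
   Context: A random compact set is a measurable map from $\Omega$ to the space of non-empty compact subsets of $\mathbb C^n$ with the Hausdorff distance and its Borel $\sigma$-algebra. For non-empty compact $E\subset\mathbb C^n$, the Siciak extremal function is $\Phi_E(z)=\sup\{|p(z)|^{1/\deg p}: p \text{ polynomial on } \mathbb C^n,\ \|p\|_E\le1,\ \deg p\ge1\}$, where $\|p\|_E=\max_E|p|$, and the pluricomplex Green function is $V_E=\log\Phi_E$. *)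

theory Defs
  imports "HOL-Analysis.Analysis" "HOL-Library.Extended_Real"
begin

(* Hausdorff distance between (nonempty, bounded) subsets of a metric space *)
definition hausdist :: "'a::metric_space set \<Rightarrow> 'a set \<Rightarrow> real" where
  "hausdist A B = max (SUP a\<in>A. infdist a B) (SUP b\<in>B. infdist b A)"

definition cpt_sets :: "(complex ^ 'n::finite) set set" where
  "cpt_sets = {K. compact K \<and> K \<noteq> {}}"

definition hausdist_open_sets :: "(complex ^ 'n::finite) set set set" where
  "hausdist_open_sets = {U. U \<subseteq> cpt_sets \<and>
     (\<forall>K\<in>U. \<exists>e>0. \<forall>L\<in>cpt_sets. hausdist K L < e \<longrightarrow> L \<in> U)}"

definition cpt_space :: "(complex ^ 'n::finite) set measure" where
  "cpt_space = sigma cpt_sets hausdist_open_sets"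

(* polynomials on C^n: finitely supported coefficient functions on multi-indices *)
definition is_mpoly :: "(('n::finite \<Rightarrow> nat) \<Rightarrow> complex) \<Rightarrow> bool" where
  "is_mpoly c \<longleftrightarrow> finite {\<alpha>. c \<alpha> \<noteq> 0}"

definition mpoly_eval :: "(('n::finite \<Rightarrow> nat) \<Rightarrow> complex) \<Rightarrow> complex ^ 'n \<Rightarrow> complex" where
  "mpoly_eval c z = (\<Sum>\<alpha>\<in>{\<alpha>. c \<alpha> \<noteq> 0}. c \<alpha> * (\<Prod>i\<in>UNIV. (z $ i) ^ \<alpha> i))"

(* total degree (0 for the zero polynomial) *)
definition mpoly_deg :: "(('n::finite \<Rightarrow> nat) \<Rightarrow> complex) \<Rightarrow> nat" where
  "mpoly_deg c = Max (insert 0 ((\<lambda>\<alpha>. \<Sum>i\<in>UNIV. \<alpha> i) ` {\<alpha>. c \<alpha> \<noteq> 0}))"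

definition sup_norm_on :: "(complex ^ 'n::finite) set \<Rightarrow> (('n \<Rightarrow> nat) \<Rightarrow> complex) \<Rightarrow> real" where
  "sup_norm_on E c = (SUP x\<in>E. norm (mpoly_eval c x))"

definition siciak :: "(complex ^ 'n::finite) set \<Rightarrow> complex ^ 'n \<Rightarrow> ereal" where
  "siciak E z = (SUP c\<in>{c. is_mpoly c \<and> mpoly_deg c \<ge> 1 \<and> sup_norm_on E c \<le> 1}.
      ereal (norm (mpoly_eval c z) powr (1 / real (mpoly_deg c))))"

definition ln_ereal :: "ereal \<Rightarrow> ereal" where
  "ln_ereal x = (if x = \<infinity> then \<infinity> else if x \<le> 0 then -\<infinity> else ereal (ln (real_of_ereal x)))"

definition green :: "(complex ^ 'n::finite) set \<Rightarrow> complex ^ 'n \<Rightarrow> ereal" where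
  "green E z = ln_ereal (siciak E z)"

end

theory Submission
  imports Defs
begin

text \<open>For fixed \<open>z\<close>, the map \<open>K \<mapsto> \<Phi>\<^sub>K(z)\<close> is lower semicontinuous for the Hausdorff
  distance. If \<open>a < |p(z)|\<^bsup>1/d\<^esup>\<close> with \<open>\<parallel>p\<parallel>\<^sub>K \<le> 1\<close>, uniform continuity of \<open>p\<close> near \<open>K\<close>
  gives \<open>\<parallel>p\<parallel>\<^sub>L < 1/t\<close> for every compact \<open>L\<close> Hausdorff-close to \<open>K\<close>, where \<open>t < 1\<close> is so
  close to \<open>1\<close> that still \<open>a < |t p(z)|\<^bsup>1/d\<^esup>\<close>; the competitor \<open>t p\<close> then shows
  \<open>a < \<Phi>\<^sub>L(z)\<close>. Hence the superlevel sets of \<open>K \<mapsto> \<Phi>\<^sub>K(z)\<close> are open, so this map is Borel,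
  and \<open>V = log \<Phi>\<close> is a monotone function of it.\<close>

lemma borel_measurable_mono_complete_linorder:
  fixes f :: "'a::{complete_linorder, linorder_topology} \<Rightarrow>
              'b::{linorder_topology, second_countable_topology}"
  assumes "mono f"
  shows "f \<in> borel_measurable borel"
proof (rule borel_measurableI_greater)
  fix y
  define S where "S = {x. y < f x}"
  have "S = {Inf S<..} \<union> ({Inf S} \<inter> S)"
  proof (intro equalityI subsetI)
    fix x assume "x \<in> S"
    then show "x \<in> {Inf S<..} \<union> ({Inf S} \<inter> S)"
      using Inf_lower[of x S] by auto
  next
    fix x assume "x \<in> {Inf S<..} \<union> ({Inf S} \<inter> S)"
    moreover have "x \<in> S" if "Inf S < x"
    proof -
      obtain s where "s \<in> S" "s < x"
        using \<open>Inf S < x\<close> by (auto simp: Inf_less_iff)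
      then show ?thesis
        using assms unfolding S_def mono_def by (auto intro: less_le_trans)
    qed
    ultimately show "x \<in> S" by auto
  qed
  moreover have "{Inf S<..} \<union> ({Inf S} \<inter> S) \<in> sets borel"
    by (intro sets.Un borel_open borel_closed finite_imp_closed) auto
  ultimately show "{x \<in> space borel. y < f x} \<in> sets borel"
    unfolding S_def by simp
qed

lemma mono_ln_ereal: "mono ln_ereal"
proof
  fix x y :: ereal
  assume "x \<le> y"
  then show "ln_ereal x \<le> ln_ereal y"
    unfolding ln_ereal_def by (cases x; cases y) auto
qed

lemma space_cpt_space: "space cpt_space = cpt_sets"
  unfolding cpt_space_def by (rule space_measure_of) (auto simp: hausdist_open_sets_def)

lemma hausdist_open_sets_in_sets: "U \<in> hausdist_open_sets \<Longrightarrow> U \<in> sets cpt_space"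
  unfolding cpt_space_def
  by (subst sets_measure_of) (auto simp: hausdist_open_sets_def)

lemma infdist_le_hausdist:
  assumes "compact L" "x \<in> L"
  shows "infdist x K \<le> hausdist K L"
proof -
  have "bdd_above ((\<lambda>b. infdist b K) ` L)"
    using assms(1)
    by (intro bounded_imp_bdd_above compact_imp_bounded compact_continuous_image
        continuous_on_infdist continuous_on_id)
  then have "infdist x K \<le> (SUP b\<in>L. infdist b K)"
    by (rule cSUP_upper[OF assms(2)])
  then show ?thesis
    unfolding hausdist_def by linarith
qed

lemma norm_less_SUP_near_compact:
  fixes f :: "'a::heine_borel \<Rightarrow> 'b::real_normed_vector"
  assumes f: "continuous_on UNIV f" and "compact K" "K \<noteq> {}" "\<epsilon> > 0"
  obtains e where "e > 0"
    "\<And>x. infdist x K < e \<Longrightarrow> norm (f x) < (SUP y\<in>K. norm (f y)) + \<epsilon>"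
proof -
  define C where "C = {x. infdist x K \<le> 1}"
  have "compact C"
    unfolding C_def using \<open>compact K\<close> \<open>K \<noteq> {}\<close> by (simp add: compact_infdist_le)
  then have "uniformly_continuous_on C f"
    using continuous_on_subset[OF f subset_UNIV] by (rule compact_uniformly_continuous[rotated])
  then obtain \<delta> where "\<delta> > 0"
    and \<delta>: "\<And>x y. x \<in> C \<Longrightarrow> y \<in> C \<Longrightarrow> dist y x < \<delta> \<Longrightarrow> dist (f y) (f x) < \<epsilon>"
    unfolding uniformly_continuous_on_def using \<open>\<epsilon> > 0\<close> by metis
  have bdd: "bdd_above ((\<lambda>y. norm (f y)) ` K)"
    using \<open>compact K\<close> continuous_on_subset[OF f subset_UNIV]
    by (intro bounded_imp_bdd_above compact_imp_bounded compact_continuous_image continuous_on_norm)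
  have "norm (f x) < (SUP y\<in>K. norm (f y)) + \<epsilon>" if "infdist x K < min 1 \<delta>" for x
  proof -
    obtain y where "y \<in> K" "infdist x K = dist x y"
      using infdist_attains_inf[OF compact_imp_closed[OF \<open>compact K\<close>] \<open>K \<noteq> {}\<close>] by metis
    moreover have "x \<in> C" "y \<in> C"
      using that \<open>y \<in> K\<close> by (simp_all add: C_def)
    ultimately have "dist (f x) (f y) < \<epsilon>"
      using \<delta> that by simp
    moreover have "norm (f y) \<le> (SUP y\<in>K. norm (f y))"
      using \<open>y \<in> K\<close> bdd by (rule cSUP_upper)
    moreover have "norm (f x) \<le> norm (f y) + dist (f x) (f y)"
      using norm_triangle_sub[of "f x" "f y"] by (simp add: dist_norm)
    ultimately show ?thesis
      by linarith
  qed
  then show ?thesis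
    using that[of "min 1 \<delta>"] \<open>\<delta> > 0\<close> by simp
qed

lemma continuous_on_mpoly_eval [continuous_intros]: "continuous_on S (mpoly_eval c)"
  unfolding mpoly_eval_def by (intro continuous_intros)

lemma
  fixes c :: "('n::finite \<Rightarrow> nat) \<Rightarrow> complex"
  assumes "a \<noteq> 0"
  shows is_mpoly_scale: "is_mpoly c \<Longrightarrow> is_mpoly (\<lambda>\<alpha>. a * c \<alpha>)"
    and mpoly_eval_scale: "mpoly_eval (\<lambda>\<alpha>. a * c \<alpha>) x = a * mpoly_eval c x"
    and mpoly_deg_scale: "mpoly_deg (\<lambda>\<alpha>. a * c \<alpha>) = mpoly_deg c"
proof -
  have supp: "{\<alpha>. a * c \<alpha> \<noteq> 0} = {\<alpha>. c \<alpha> \<noteq> 0}"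
    using assms by auto
  show "is_mpoly c \<Longrightarrow> is_mpoly (\<lambda>\<alpha>. a * c \<alpha>)"
    unfolding is_mpoly_def supp .
  show "mpoly_eval (\<lambda>\<alpha>. a * c \<alpha>) x = a * mpoly_eval c x"
    unfolding mpoly_eval_def supp by (simp add: sum_distrib_left mult.assoc)
  show "mpoly_deg (\<lambda>\<alpha>. a * c \<alpha>) = mpoly_deg c"
    unfolding mpoly_deg_def supp ..
qed

lemma siciak_ge_scaled:
  assumes c: "is_mpoly c" "mpoly_deg c \<ge> 1"
    and "t > 0" "L \<noteq> {}" "\<And>x. x \<in> L \<Longrightarrow> t * norm (mpoly_eval c x) \<le> 1"
  shows "ereal (t powr (1 / mpoly_deg c) * norm (mpoly_eval c z) powr (1 / mpoly_deg c))
           \<le> siciak L z"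
proof -
  define c' where "c' = (\<lambda>\<alpha>. complex_of_real t * c \<alpha>)"
  have t: "complex_of_real t \<noteq> 0"
    using \<open>t > 0\<close> by simp
  have "sup_norm_on L c' \<le> 1"
    unfolding sup_norm_on_def c'_def mpoly_eval_scale[OF t]
    using assms(4,5) \<open>t > 0\<close> by (intro cSUP_least) (auto simp: norm_mult)
  then have "is_mpoly c' \<and> mpoly_deg c' \<ge> 1 \<and> sup_norm_on L c' \<le> 1"
    using c unfolding c'_def by (simp add: is_mpoly_scale[OF t] mpoly_deg_scale[OF t])
  moreover have "norm (mpoly_eval c' z) powr (1 / mpoly_deg c') =
      t powr (1 / mpoly_deg c) * norm (mpoly_eval c z) powr (1 / mpoly_deg c)"
    unfolding c'_def mpoly_eval_scale[OF t] mpoly_deg_scale[OF t]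
    using \<open>t > 0\<close> by (simp add: norm_mult powr_mult)
  ultimately show ?thesis
    unfolding siciak_def by (metis (mono_tags, lifting) SUP_upper mem_Collect_eq)
qed

lemma less_ereal_powr_scale_below_one:
  fixes r d :: real
  assumes "a < ereal r"
  obtains t where "0 < t" "t < 1" "a < ereal (t powr d * r)"
proof -
  have "((\<lambda>t. ereal (t powr d * r)) \<longlongrightarrow> ereal (1 powr d * r)) (at_left 1)"
    by (intro tendsto_intros) auto
  then have "\<forall>\<^sub>F t in at_left 1. 0 < t \<and> t < 1 \<and> a < ereal (t powr d * r)"
    using assms
    by (intro eventually_conj eventually_at_left_real order_tendstoD(1))
      (auto simp: eventually_at_filter)
  then obtain t where "0 < t \<and> t < 1 \<and> a < ereal (t powr d * r)"
    using eventually_happens'[OF trivial_limit_at_left_real] by blast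
  then show ?thesis
    using that by blast
qed

lemma siciak_greater_open: "{E \<in> cpt_sets. a < siciak E z} \<in> hausdist_open_sets"
  unfolding hausdist_open_sets_def
proof (intro CollectI conjI ballI subsetI)
  fix K assume "K \<in> {E \<in> cpt_sets. a < siciak E z}"
  then have "compact K" "K \<noteq> {}" and "a < siciak K z"
    by (auto simp: cpt_sets_def)
  then obtain c where c: "is_mpoly c" "mpoly_deg c \<ge> 1" "sup_norm_on K c \<le> 1"
    and "a < ereal (norm (mpoly_eval c z) powr (1 / mpoly_deg c))"
    unfolding siciak_def less_SUP_iff by auto
  define d where "d = 1 / real (mpoly_deg c)"
  define r where "r = norm (mpoly_eval c z) powr d"
  obtain t where t: "0 < t" "t < 1" "a < ereal (t powr d * r)"
    using less_ereal_powr_scale_below_one \<open>a < ereal (norm (mpoly_eval c z) powr (1 / mpoly_deg c))\<close>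
    unfolding r_def d_def by blast
  obtain e where "e > 0" and e: "\<And>x. infdist x K < e \<Longrightarrow>
      norm (mpoly_eval c x) < sup_norm_on K c + (1 / t - 1)"
    using norm_less_SUP_near_compact[OF continuous_on_mpoly_eval \<open>compact K\<close> \<open>K \<noteq> {}\<close>, of "1 / t - 1"]
    using t unfolding sup_norm_on_def by auto
  have "L \<in> {E \<in> cpt_sets. a < siciak E z}" if "L \<in> cpt_sets" "hausdist K L < e" for L
  proof -
    have "t * norm (mpoly_eval c x) \<le> 1" if "x \<in> L" for x
    proof -
      have "norm (mpoly_eval c x) < 1 / t"
        using e[of x] infdist_le_hausdist[of L x K] \<open>L \<in> cpt_sets\<close> \<open>x \<in> L\<close>
          \<open>hausdist K L < e\<close> c(3) by (auto simp: cpt_sets_def)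
      then show ?thesis
        using t by (simp add: field_simps)
    qed
    then have "ereal (t powr d * r) \<le> siciak L z"
      using siciak_ge_scaled[OF c(1,2) \<open>t > 0\<close>] \<open>L \<in> cpt_sets\<close>
      by (auto simp: cpt_sets_def d_def r_def)
    then show ?thesis
      using t(3) \<open>L \<in> cpt_sets\<close> by auto
  qed
  then show "\<exists>e>0. \<forall>L\<in>cpt_sets. hausdist K L < e \<longrightarrow> L \<in> {E \<in> cpt_sets. a < siciak E z}"
    using \<open>e > 0\<close> by blast
qed auto

lemma borel_measurable_siciak: "(\<lambda>E. siciak E z) \<in> borel_measurable cpt_space"
proof (rule borel_measurableI_greater)
  fix a
  show "{E \<in> space cpt_space. a < siciak E z} \<in> sets cpt_space"
    unfolding space_cpt_space by (intro hausdist_open_sets_in_sets siciak_greater_open)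
qed

lemma borel_measurable_green: "(\<lambda>E. green E z) \<in> borel_measurable cpt_space"
  unfolding green_def
  by (rule measurable_compose[OF borel_measurable_siciak
        borel_measurable_mono_complete_linorder[OF mono_ln_ereal]])

theorem theorem6p20:
  fixes M :: "'a measure"
    and K :: "'a \<Rightarrow> (complex ^ 'n::finite) set"
  assumes "K \<in> measurable M cpt_space"
  shows "\<forall>z. (\<lambda>\<omega>. siciak (K \<omega>) z) \<in> borel_measurable M
            \<and> (\<lambda>\<omega>. green (K \<omega>) z) \<in> borel_measurable M"
  using measurable_compose[OF assms borel_measurable_siciak]
    measurable_compose[OF assms borel_measurable_green]
  by blast

end
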